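(* Let $n,k\geq 1$ and let ${\bf m}=(m_1,\dots,m_k)$ be an array of nonnegative integers. For every permutation $\tau\in\mathfrak{S}_{k-1}$ there exists a bijection $\mathfrak{a}\mapsto\mathfrak{b}$ from $\mathcal{A}_n^k({\bf m})$ onto $\mathcal{A}_n^k({\bf m}')$, where ${\bf m}'=(m_{\tau(1)},\dots,m_{\tau(k-1)},m_k)$, such that $\mathrm{DES}(\mathfrak{a})=\mathrm{DES}(\mathfrak{b})$, $\mathrm{DEZ}(\mathfrak{a})=\mathrm{DEZ}(\mathfrak{b})$ and $\mathrm{Der}(\mathfrak{a})=\mathrm{Der}(\mathfrak{b})$.
   Context: $\mathfrak{S}_n$ is the set of permutations of $[n]=\{1,\dots,n\}$; $\mathrm{FIX}(\pi)=\{i:\pi(i)=i\}$. For $k\ge1$, a $k$-arrangement of $[n]$ is a pair $\mathfrak{a}=(\pi,\phi)$ with $\pi\in\mathfrak{S}_n$ and $\phi:\mathrm{FIX}(\pi)\to\{-1,\dots,-k\}$ arbitrary; $\mathcal{A}_n^k$ is the set of them. The positive reduction of an integer word replaces every occurrence of its $i$-th smallest positive letter by $i$, for all $i$ (negative letters unchanged). The derangement form $\mathrm{df}_k(\mathfrak{a})$ is obtained from $\pi(1)\cdots\pi(n)$ by replacing $\pi(i)$ with $\phi(i)$ for each $i\in\mathrm{FIX}(\pi)$ and then applying positive reduction; the permutation form $\mathrm{pf}_k(\mathfrak{a})$ is obtained likewise, replacing only for those $i\in\mathrm{FIX}(\pi)$ with $\phi(i)\neq-k$. For an integer word $w=w_1\cdots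 w_n$, $\mathrm{DES}(w)=\{i\in[n-1]:w_i>w_{i+1}\}$, and $\mathrm{Pos}(w)$ is the subword of positive letters. $\mathrm{DES}(\mathfrak{a})=\mathrm{DES}(\mathrm{pf}_k(\mathfrak{a}))$, $\mathrm{DEZ}(\mathfrak{a})=\mathrm{DES}(\mathrm{df}_k(\mathfrak{a}))$, $\mathrm{Der}(\mathfrak{a})=\mathrm{Pos}(\mathrm{df}_k(\mathfrak{a}))$, $\mathrm{fix}_i(\mathfrak{a})=|\{j\in\mathrm{FIX}(\pi):\phi(j)=-i\}|$, and $\mathcal{A}_n^k({\bf m})=\{\mathfrak{a}\in\mathcal{A}_n^k:\mathrm{fix}_i(\mathfrak{a})=m_i,\ 1\le i\le k\}$. *)

theory Defs
  imports "HOL-Combinatorics.Permutations"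
begin

(* Integer words are lists of integers; w_i is  w ! (i-1). *)

definition FIXset :: "(nat \<Rightarrow> nat) \<Rightarrow> nat \<Rightarrow> nat set" where
  "FIXset \<pi> n = {i \<in> {1..n}. \<pi> i = i}"

(* k-arrangements of [n]: pairs (pi, phi), pi a permutation of {1..n},
   phi : FIX(pi) -> {-1..-k}; phi is normalised to 0 outside FIX(pi) so that
   each arrangement has a unique representative. *)
definition arrangements :: "nat \<Rightarrow> nat \<Rightarrow> ((nat \<Rightarrow> nat) \<times> (nat \<Rightarrow> int)) set" where
  "arrangements n k = {(\<pi>, \<phi>). \<pi> permutes {1..n} \<and>
      (\<forall>i \<in> FIXset \<pi> n. \<phi> i \<in> {- int k .. -1}) \<and>
      (\<forall>i. i \<notin> FIXset \<pi> n \<longrightarrow> \<phi> i = 0)}"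

(* positive reduction: the i-th smallest positive letter becomes i *)
definition pos_red :: "int list \<Rightarrow> int list" where
  "pos_red w = map (\<lambda>x. if 0 < x then int (card {y \<in> set w. 0 < y \<and> y \<le> x}) else x) w"

definition df :: "nat \<Rightarrow> nat \<Rightarrow> (nat \<Rightarrow> nat) \<times> (nat \<Rightarrow> int) \<Rightarrow> int list" where
  "df n k a = (case a of (\<pi>, \<phi>) \<Rightarrow>
     pos_red (map (\<lambda>i. if i \<in> FIXset \<pi> n then \<phi> i else int (\<pi> i)) [1..<n+1]))"

definition pf :: "nat \<Rightarrow> nat \<Rightarrow> (nat \<Rightarrow> nat) \<times> (nat \<Rightarrow> int) \<Rightarrow> int list" where
  "pf n k a = (case a of (\<pi>, \<phi>) \<Rightarrow>
     pos_red (map (\<lambda>i. if i \<in> FIXset \<pi> n \<and> \<phi> i \<noteq> - int k then \<phi> i else int (\<pi> i)) [1..<n+1]))"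

definition DESw :: "int list \<Rightarrow> nat set" where
  "DESw w = {i \<in> {1..<length w}. w ! (i - 1) > w ! i}"

definition Pos :: "int list \<Rightarrow> int list" where
  "Pos w = filter (\<lambda>x. 0 < x) w"

definition DES_arr :: "nat \<Rightarrow> nat \<Rightarrow> (nat \<Rightarrow> nat) \<times> (nat \<Rightarrow> int) \<Rightarrow> nat set" where
  "DES_arr n k a = DESw (pf n k a)"

definition DEZ_arr :: "nat \<Rightarrow> nat \<Rightarrow> (nat \<Rightarrow> nat) \<times> (nat \<Rightarrow> int) \<Rightarrow> nat set" where
  "DEZ_arr n k a = DESw (df n k a)"

definition Der_arr :: "nat \<Rightarrow> nat \<Rightarrow> (nat \<Rightarrow> nat) \<times> (nat \<Rightarrow> int) \<Rightarrow> int list" where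
  "Der_arr n k a = Pos (df n k a)"

definition fix_cnt :: "nat \<Rightarrow> nat \<Rightarrow> (nat \<Rightarrow> nat) \<times> (nat \<Rightarrow> int) \<Rightarrow> nat" where
  "fix_cnt n i a = (case a of (\<pi>, \<phi>) \<Rightarrow> card {j \<in> FIXset \<pi> n. \<phi> j = - int i})"

definition arrangements_m :: "nat \<Rightarrow> nat \<Rightarrow> (nat \<Rightarrow> nat) \<Rightarrow> ((nat \<Rightarrow> nat) \<times> (nat \<Rightarrow> int)) set" where
  "arrangements_m n k m = {a \<in> arrangements n k. \<forall>i \<in> {1..k}. fix_cnt n i a = m i}"

end

theory Submission
  imports Defs
begin

text \<open>
  It suffices to exchange the multiplicities of two adjacent labels \<open>-a\<close> and \<open>-(a+1)\<close> with
  \<open>a + 1 < k\<close>, since adjacent transpositions generate the permutations of \<open>{1..k-1}\<close>.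
  Such an exchange keeps \<open>\<pi>\<close> and only relabels fixed points carrying \<open>-a\<close> or \<open>-(a+1)\<close>;
  as positive reduction only looks at the positive letters, \<open>DES\<close>, \<open>DEZ\<close> and \<open>Der\<close> are
  unchanged as long as label \<open>-k\<close> is untouched and every pair of adjacent fixed points keeps
  its order. Call a position of such a fixed point bound if it is part of an adjacent pair
  \<open>(-a, -(a+1))\<close> and free otherwise. Along every maximal run of consecutive free
  positions the labels read \<open>-(a+1) \<dots> -(a+1) -a \<dots> -a\<close>; reversing the run and exchanging
  the two labels keeps this shape and all comparisons with neighbouring positions, and it
  exchanges the numbers of \<open>-a\<close> and \<open>-(a+1)\<close>.
\<close>

section \<open>Positive reduction\<close>

lemma pos_red_nth:
  "i < length w \<Longrightarrow> pos_red w ! i =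
     (if 0 < w ! i then int (card {y \<in> set w. 0 < y \<and> y \<le> w ! i}) else w ! i)"
  by (simp add: pos_red_def)

lemma length_pos_red [simp]: "length (pos_red w) = length w"
  by (simp add: pos_red_def)

lemma pos_red_nth_pos_iff:
  assumes "i < length w"
  shows "0 < pos_red w ! i \<longleftrightarrow> 0 < w ! i"
proof (cases "0 < w ! i")
  case True
  then have "card {y \<in> set w. 0 < y \<and> y \<le> w ! i} > 0"
    using assms by (subst card_gt_0_iff) auto
  then show ?thesis using True pos_red_nth[OF assms] by simp
qed (use pos_red_nth[OF assms] in simp)

lemma positive_set_max0:
  "{y \<in> set (map (max 0) w). 0 < y \<and> y \<le> x} = {y \<in> set w. 0 < y \<and> y \<le> (x::int)}"
  by (auto simp: image_iff) (metis max.absorb2 less_imp_le)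

lemma max0_pos_red: "map (max 0) (pos_red w) = pos_red (map (max 0) w)"
proof (rule nth_equalityI)
  fix i assume "i < length (map (max 0) (pos_red w))"
  then have i: "i < length w" and i': "i < length (map (max 0) w)" by simp_all
  show "map (max 0) (pos_red w) ! i = pos_red (map (max 0) w) ! i"
  proof (cases "0 < w ! i")
    case True
    then have "map (max 0) w ! i = w ! i" using i by simp
    then have "pos_red (map (max 0) w) ! i = int (card {y \<in> set w. 0 < y \<and> y \<le> w ! i})"
      using pos_red_nth[OF i'] True by (simp only: positive_set_max0) simp
    moreover have "0 < pos_red w ! i" using pos_red_nth_pos_iff[OF i] True by simp
    ultimately show ?thesis using pos_red_nth[OF i] True i by simp
  next
    case False
    then show ?thesis using pos_red_nth[OF i] pos_red_nth[OF i'] i by simp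
  qed
qed simp

lemma filter_pos_max0: "filter (\<lambda>x. 0 < x) (map (max 0) w) = filter (\<lambda>x. (0::int) < x) w"
  by (induction w) auto

lemma Pos_pos_red_eq:
  assumes "map (max 0) w = map (max 0) w'"
  shows "Pos (pos_red w) = Pos (pos_red w')"
  by (metis Pos_def assms filter_pos_max0 max0_pos_red)

lemma max0_eq_nth_pos_iff:
  fixes w w' :: "int list"
  assumes "map (max 0) w = map (max 0) w'" "i < length w"
  shows "0 < w' ! i \<longleftrightarrow> 0 < w ! i"
proof -
  have "max 0 (w ! i) = max 0 (w' ! i)"
    using assms by (metis length_map nth_map)
  then show ?thesis by (auto simp: max_def split: if_splits)
qed

lemma pos_red_nth_eq:
  assumes max0: "map (max 0) w = map (max 0) w'" and i: "i < length w" and pos: "0 < w ! i"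
  shows "pos_red w ! i = pos_red w' ! i"
proof -
  have i': "i < length w'" using max0 i by (metis length_map)
  have "max 0 (pos_red w ! i) = max 0 (pos_red w' ! i)"
    using max0 i i' by (metis length_pos_red max0_pos_red nth_map)
  moreover have "0 < pos_red w ! i" "0 < pos_red w' ! i"
    using pos_red_nth_pos_iff[OF i] pos_red_nth_pos_iff[OF i'] max0_eq_nth_pos_iff[OF max0 i] pos
    by simp_all
  ultimately show ?thesis by simp
qed

lemma DESw_pos_red_eq:
  assumes max0: "map (max 0) w = map (max 0) w'"
    and nonpos: "\<And>i. Suc i < length w \<Longrightarrow> w ! i \<le> 0 \<Longrightarrow> w ! Suc i \<le> 0 \<Longrightarrow>
                   w ! i > w ! Suc i \<longleftrightarrow> w' ! i > w' ! Suc i"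
  shows "DESw (pos_red w) = DESw (pos_red w')"
proof -
  have len: "length w' = length w" using max0 by (metis length_map)
  have nonpos_fixed: "pos_red v ! i = v ! i" if "i < length v" "v ! i \<le> 0" for v i
    using that pos_red_nth by simp
  have "pos_red w ! i > pos_red w ! Suc i \<longleftrightarrow> pos_red w' ! i > pos_red w' ! Suc i"
    if i: "Suc i < length w" for i
    using i nonpos[OF i] len max0_eq_nth_pos_iff[OF max0, of i] max0_eq_nth_pos_iff[OF max0, of "Suc i"]
      pos_red_nth_eq[OF max0, of i] pos_red_nth_eq[OF max0, of "Suc i"]
      pos_red_nth_pos_iff[of i w] pos_red_nth_pos_iff[of "Suc i" w]
      pos_red_nth_pos_iff[of i w'] pos_red_nth_pos_iff[of "Suc i" w']
      nonpos_fixed[of i w] nonpos_fixed[of "Suc i" w] nonpos_fixed[of i w'] nonpos_fixed[of "Suc i" w']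
    by (smt (verit) Suc_lessD)
  then have "j \<in> DESw (pos_red w) \<longleftrightarrow> j \<in> DESw (pos_red w')" for j
    unfolding DESw_def using len by (cases j) auto
  then show ?thesis by blast
qed

section \<open>Flipping the free runs of a boolean sequence\<close>

definition run_start :: "nat set \<Rightarrow> nat \<Rightarrow> nat" where
  "run_start F j = (LEAST l. {l..j} \<subseteq> F)"

definition run_end :: "nat set \<Rightarrow> nat \<Rightarrow> nat" where
  "run_end F j = (LEAST r. j \<le> r \<and> Suc r \<notin> F)"

definition run_mirror :: "nat set \<Rightarrow> nat \<Rightarrow> nat" where
  "run_mirror F j = run_start F j + run_end F j - j"

lemma run_start_props:
  assumes "j \<in> F"
  shows "run_start F j \<le> j" "{run_start F j..j} \<subseteq> F" "run_start F j = 0 \<or> run_start F j - 1 \<notin> F"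
proof -
  have refl: "{j..j} \<subseteq> F" using assms by auto
  show sub: "{run_start F j..j} \<subseteq> F" unfolding run_start_def by (rule LeastI[of _ j], fact refl)
  show le: "run_start F j \<le> j" unfolding run_start_def by (rule Least_le, fact refl)
  show "run_start F j = 0 \<or> run_start F j - 1 \<notin> F"
  proof (rule ccontr)
    assume "\<not> ?thesis"
    then have pred: "0 < run_start F j" "run_start F j - 1 \<in> F" by auto
    then have "{run_start F j - 1..j} = insert (run_start F j - 1) {run_start F j..j}"
      using le by auto
    then have "{run_start F j - 1..j} \<subseteq> F" using sub pred by simp
    moreover have "run_start F j - 1 < run_start F j" using pred by simp
    ultimately show False unfolding run_start_def using not_less_Least by blast
  qed
qed

lemma run_end_props:
  assumes "finite F" "j \<in> F"
  shows "j \<le> run_end F j" "{j..run_end F j} \<subseteq> F" "Suc (run_end F j) \<notin> F"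
proof -
  have exists: "j \<le> max j (Max F) \<and> Suc (max j (Max F)) \<notin> F"
    using Max_ge[OF assms(1)] by (metis Suc_n_not_le_n max.cobounded1 max.coboundedI2)
  have end_ok: "j \<le> run_end F j \<and> Suc (run_end F j) \<notin> F"
    unfolding run_end_def by (rule LeastI, fact exists)
  then show "j \<le> run_end F j" "Suc (run_end F j) \<notin> F" by auto
  show "{j..run_end F j} \<subseteq> F"
  proof
    fix i assume i: "i \<in> {j..run_end F j}"
    show "i \<in> F"
    proof (rule ccontr)
      assume "i \<notin> F"
      then have "i \<noteq> j" using assms(2) by auto
      then have "j \<le> i - 1 \<and> Suc (i - 1) \<notin> F" "i - 1 < run_end F j"
        using i \<open>i \<notin> F\<close> by auto
      then show False unfolding run_end_def using not_less_Least by blast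
    qed
  qed
qed

lemma run_subset:
  assumes "finite F" "j \<in> F"
  shows "{run_start F j..run_end F j} \<subseteq> F"
  using run_start_props(2)[OF assms(2)] run_end_props(2)[OF assms] by fastforce

lemma run_bounds_unique:
  assumes "finite F" "l \<le> j" "j \<le> r" "{l..r} \<subseteq> F" "l = 0 \<or> l - 1 \<notin> F" "Suc r \<notin> F"
  shows "run_start F j = l" "run_end F j = r"
proof -
  have j: "j \<in> F" using assms by auto
  note S = run_start_props[OF j] and E = run_end_props[OF assms(1) j]
  show "run_start F j = l"
  proof (rule ccontr)
    assume "run_start F j \<noteq> l"
    then consider "l < run_start F j" | "run_start F j < l" by linarith
    then show False
    proof cases
      case 1
      then have "run_start F j - 1 \<in> {l..r}" using S assms by auto
      then show False using S assms 1 by auto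
    next
      case 2
      then have "l - 1 \<in> {run_start F j..j}" using assms by auto
      then show False using S assms 2 by auto
    qed
  qed
  show "run_end F j = r"
  proof (rule ccontr)
    assume "run_end F j \<noteq> r"
    then consider "r < run_end F j" | "run_end F j < r" by linarith
    then show False
    proof cases
      case 1
      then have "Suc r \<in> {j..run_end F j}" using assms by auto
      then show False using E assms by blast
    next
      case 2
      then have "Suc (run_end F j) \<in> {l..r}" using assms E by auto
      then show False using E assms by blast
    qed
  qed
qed

lemma run_mirror_in:
  assumes "finite F" "j \<in> F"
  shows "run_mirror F j \<in> F"
proof -
  have "run_start F j \<le> run_mirror F j" "run_mirror F j \<le> run_end F j"
    using run_start_props(1)[OF assms(2)] run_end_props(1)[OF assms] unfolding run_mirror_def by auto
  then show ?thesis using run_subset[OF assms] by auto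
qed

lemma run_mirror_involutive:
  assumes "finite F" "j \<in> F"
  shows "run_mirror F (run_mirror F j) = j"
proof -
  define l r where "l = run_start F j" and "r = run_end F j"
  have bounds: "l \<le> j" "j \<le> r" "l = 0 \<or> l - 1 \<notin> F" "Suc r \<notin> F" "{l..r} \<subseteq> F"
    using run_start_props[OF assms(2)] run_end_props[OF assms] run_subset[OF assms]
    unfolding l_def r_def by auto
  have mirror: "run_mirror F j = l + r - j" unfolding run_mirror_def l_def r_def ..
  then have "l \<le> run_mirror F j" "run_mirror F j \<le> r" using bounds by auto
  then have "run_start F (run_mirror F j) = l" "run_end F (run_mirror F j) = r"
    using run_bounds_unique[OF assms(1) _ _ bounds(5,3,4)] by auto
  then show ?thesis using mirror bounds unfolding run_mirror_def by auto
qed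

lemma run_mirror_Suc:
  assumes "finite F" "j \<in> F" "Suc j \<in> F"
  shows "Suc (run_mirror F (Suc j)) = run_mirror F j"
proof -
  define l r where "l = run_start F j" and "r = run_end F j"
  have bounds: "l \<le> j" "j \<le> r" "l = 0 \<or> l - 1 \<notin> F" "Suc r \<notin> F" "{l..r} \<subseteq> F"
    using run_start_props[OF assms(2)] run_end_props[OF assms(1,2)] run_subset[OF assms(1,2)]
    unfolding l_def r_def by auto
  then have "Suc j \<le> r" using assms(3) by (metis le_antisym not_less_eq_eq)
  then have "run_start F (Suc j) = l" "run_end F (Suc j) = r"
    using run_bounds_unique[OF assms(1) _ _ bounds(5,3,4)] bounds(1) by auto
  then show ?thesis unfolding run_mirror_def l_def r_def using bounds \<open>Suc j \<le> r\<close> l_def r_def by auto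
qed

definition bool_descents :: "nat set \<Rightarrow> (nat \<Rightarrow> bool) \<Rightarrow> nat set" where
  "bool_descents S b = {j. j \<in> S \<and> Suc j \<in> S \<and> b j \<and> \<not> b (Suc j)}"

definition free_set :: "nat set \<Rightarrow> (nat \<Rightarrow> bool) \<Rightarrow> nat set" where
  "free_set S b = S - bool_descents S b - Suc ` bool_descents S b"

definition flip_free :: "nat set \<Rightarrow> (nat \<Rightarrow> bool) \<Rightarrow> nat \<Rightarrow> bool" where
  "flip_free S b j = (if j \<in> free_set S b then \<not> b (run_mirror (free_set S b) j) else b j)"

lemma free_set_subset: "free_set S b \<subseteq> S"
  unfolding free_set_def by auto

lemma finite_free_set: "finite S \<Longrightarrow> finite (free_set S b)"
  using free_set_subset finite_subset by blast

lemma flip_free_descent_iff: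
  assumes fin: "finite S" and j: "j \<in> S" "Suc j \<in> S"
  shows "flip_free S b j \<and> \<not> flip_free S b (Suc j) \<longleftrightarrow> b j \<and> \<not> b (Suc j)"
proof -
  let ?F = "free_set S b" and ?D = "bool_descents S b" and ?b = "flip_free S b"
  have finF: "finite ?F" using finite_free_set[OF fin] .
  consider "j \<in> ?F" "Suc j \<in> ?F" | "j \<in> ?F" "Suc j \<notin> ?F" | "j \<notin> ?F" "Suc j \<in> ?F"
    | "j \<notin> ?F" "Suc j \<notin> ?F" by blast
  then show ?thesis
  proof cases
    case 1
    define i where "i = run_mirror ?F (Suc j)"
    have Suc_i: "Suc i = run_mirror ?F j" unfolding i_def by (rule run_mirror_Suc[OF finF 1])
    have "i \<in> ?F" unfolding i_def using run_mirror_in[OF finF 1(2)] .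
    moreover have "Suc i \<in> ?F" unfolding Suc_i using run_mirror_in[OF finF 1(1)] .
    ultimately have "\<not> (b i \<and> \<not> b (Suc i))"
      using free_set_subset[of S b] unfolding free_set_def bool_descents_def by auto
    moreover have "?b j = (\<not> b (Suc i))" "?b (Suc j) = (\<not> b i)"
      using 1 Suc_i i_def unfolding flip_free_def by auto
    moreover have "\<not> (b j \<and> \<not> b (Suc j))"
      using 1 j unfolding free_set_def bool_descents_def by auto
    ultimately show ?thesis by auto
  next
    case 2
    then have "Suc j \<in> ?D" using j unfolding free_set_def by auto
    then show ?thesis using 2 unfolding flip_free_def free_set_def bool_descents_def by auto
  next
    case 3
    then have "j \<in> Suc ` ?D" using j unfolding free_set_def by auto
    then show ?thesis using 3 unfolding flip_free_def free_set_def bool_descents_def by auto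
  next
    case 4
    then show ?thesis unfolding flip_free_def by simp
  qed
qed

lemma bool_descents_flip_free:
  assumes "finite S"
  shows "bool_descents S (flip_free S b) = bool_descents S b"
  unfolding bool_descents_def
  by (rule Collect_cong) (use flip_free_descent_iff[OF assms, where b = b] in blast)

lemma free_set_flip_free: "finite S \<Longrightarrow> free_set S (flip_free S b) = free_set S b"
  unfolding free_set_def using bool_descents_flip_free by simp

lemma flip_free_involutive:
  assumes "finite S"
  shows "flip_free S (flip_free S b) = b"
proof
  fix j
  let ?F = "free_set S b"
  show "flip_free S (flip_free S b) j = b j"
  proof (cases "j \<in> ?F")
    case True
    have "run_mirror ?F j \<in> ?F" "run_mirror ?F (run_mirror ?F j) = j"
      using run_mirror_in[OF finite_free_set[OF assms] True]
        run_mirror_involutive[OF finite_free_set[OF assms] True] .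
    then show ?thesis
      using True unfolding flip_free_def[of S "flip_free S b"] free_set_flip_free[OF assms]
      by (simp only: flip_free_def if_True not_not)
  next
    case False
    then show ?thesis
      unfolding flip_free_def[of S "flip_free S b"] free_set_flip_free[OF assms]
      by (simp only: flip_free_def if_False)
  qed
qed

lemma flip_free_cong:
  assumes "finite S" "\<forall>j\<in>S. b j = b' j" "j \<in> S"
  shows "flip_free S b j = flip_free S b' j"
proof -
  have "free_set S b = free_set S b'"
    using assms(2) unfolding free_set_def bool_descents_def by auto
  moreover have "run_mirror (free_set S b) j \<in> S" if "j \<in> free_set S b"
    using run_mirror_in[OF finite_free_set[OF assms(1)] that] free_set_subset by blast
  ultimately show ?thesis using assms(2,3) unfolding flip_free_def by simp
qed

lemma card_flip_free:
  assumes fin: "finite S"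
  shows "card {j\<in>S. flip_free S b j} = card {j\<in>S. \<not> b j}"
proof -
  let ?F = "free_set S b" and ?D = "bool_descents S b" and ?m = "run_mirror (free_set S b)"
  have finD: "finite ?D" using fin unfolding bool_descents_def by auto
  have true_split: "{j\<in>S. flip_free S b j} = ?D \<union> {j\<in>?F. \<not> b (?m j)}"
    unfolding flip_free_def free_set_def bool_descents_def by auto
  have false_split: "{j\<in>S. \<not> b j} = Suc ` ?D \<union> {j\<in>?F. \<not> b j}"
    unfolding free_set_def bool_descents_def by auto
  have finA: "finite {j\<in>?F. P j}" for P using finite_free_set[OF fin] by simp
  have "bij_betw ?m {j\<in>?F. \<not> b (?m j)} {j\<in>?F. \<not> b j}"
    by (rule bij_betw_byWitness[where f'="?m"])
      (use run_mirror_in[OF finite_free_set[OF fin]] run_mirror_involutive[OF finite_free_set[OF fin]] in auto)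
  then have mirror_card: "card {j\<in>?F. \<not> b (?m j)} = card {j\<in>?F. \<not> b j}"
    by (rule bij_betw_same_card)
  have disj: "?D \<inter> {j\<in>?F. \<not> b (?m j)} = {}" "Suc ` ?D \<inter> {j\<in>?F. \<not> b j} = {}"
    unfolding free_set_def by auto
  have "card {j\<in>S. flip_free S b j} = card ?D + card {j\<in>?F. \<not> b (?m j)}"
    unfolding true_split by (rule card_Un_disjoint[OF finD finA disj(1)])
  also have "\<dots> = card (Suc ` ?D) + card {j\<in>?F. \<not> b j}"
    by (simp add: card_image mirror_card)
  also have "\<dots> = card {j\<in>S. \<not> b j}"
    unfolding false_split by (rule card_Un_disjoint[OF finite_imageI[OF finD] finA disj(2), symmetric])
  finally show ?thesis .
qed

section \<open>Arrangements with the same fixed-point pattern\<close>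

definition labelled_word :: "nat \<Rightarrow> (nat \<Rightarrow> nat) \<Rightarrow> (nat \<Rightarrow> bool) \<Rightarrow> (nat \<Rightarrow> int) \<Rightarrow> int list" where
  "labelled_word n \<pi> P \<phi> = map (\<lambda>i. if P i then \<phi> i else int (\<pi> i)) [1..<n+1]"

lemma labelled_word_nth:
  "p < n \<Longrightarrow> labelled_word n \<pi> P \<phi> ! p = (if P (Suc p) then \<phi> (Suc p) else int (\<pi> (Suc p)))"
  unfolding labelled_word_def by (subst nth_map) (simp_all del: upt_Suc)

lemma length_labelled_word [simp]: "length (labelled_word n \<pi> P \<phi>) = n"
  by (simp add: labelled_word_def)

lemma labelled_word_stats:
  assumes perm: "\<pi> permutes {1..n}"
    and nonpos: "\<And>i. P i \<Longrightarrow> \<phi> i \<le> 0" "\<And>i. P i \<Longrightarrow> \<phi>' i \<le> 0"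
    and adjacent: "\<And>i. P i \<Longrightarrow> P (Suc i) \<Longrightarrow> \<phi> i > \<phi> (Suc i) \<longleftrightarrow> \<phi>' i > \<phi>' (Suc i)"
  shows "DESw (pos_red (labelled_word n \<pi> P \<phi>)) = DESw (pos_red (labelled_word n \<pi> P \<phi>'))"
    and "Pos (pos_red (labelled_word n \<pi> P \<phi>)) = Pos (pos_red (labelled_word n \<pi> P \<phi>'))"
proof -
  have "map (max 0) (labelled_word n \<pi> P \<psi>) = map (\<lambda>i. if P i then 0 else int (\<pi> i)) [1..<n+1]"
    if "\<And>i. P i \<Longrightarrow> \<psi> i \<le> 0" for \<psi>
    unfolding labelled_word_def using that by (auto simp: max.absorb1)
  then have max0: "map (max 0) (labelled_word n \<pi> P \<phi>) = map (max 0) (labelled_word n \<pi> P \<phi>')"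
    using nonpos by metis
  have positive: "0 < int (\<pi> (Suc p))" if "p < n" for p
    using permutes_in_image[OF perm, of "Suc p"] that by auto
  show "DESw (pos_red (labelled_word n \<pi> P \<phi>)) = DESw (pos_red (labelled_word n \<pi> P \<phi>'))"
  proof (rule DESw_pos_red_eq[OF max0])
    fix p assume p: "Suc p < length (labelled_word n \<pi> P \<phi>)"
      and "labelled_word n \<pi> P \<phi> ! p \<le> 0" "labelled_word n \<pi> P \<phi> ! Suc p \<le> 0"
    then have "P (Suc p)" "P (Suc (Suc p))"
      using positive[of p] positive[of "Suc p"] by (auto simp: labelled_word_nth split: if_splits)
    then show "labelled_word n \<pi> P \<phi> ! p > labelled_word n \<pi> P \<phi> ! Suc p \<longleftrightarrow>
               labelled_word n \<pi> P \<phi>' ! p > labelled_word n \<pi> P \<phi>' ! Suc p"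
      using p adjacent by (simp add: labelled_word_nth)
  qed
  show "Pos (pos_red (labelled_word n \<pi> P \<phi>)) = Pos (pos_red (labelled_word n \<pi> P \<phi>'))"
    by (rule Pos_pos_red_eq[OF max0])
qed

definition arr_stats :: "nat \<Rightarrow> nat \<Rightarrow> (nat \<Rightarrow> nat) \<times> (nat \<Rightarrow> int) \<Rightarrow> nat set \<times> nat set \<times> int list" where
  "arr_stats n k x = (DES_arr n k x, DEZ_arr n k x, Der_arr n k x)"

lemma arrangementsD:
  assumes "(\<pi>, \<phi>) \<in> arrangements n k"
  shows "\<pi> permutes {1..n}" "\<And>i. i \<in> FIXset \<pi> n \<Longrightarrow> - int k \<le> \<phi> i \<and> \<phi> i \<le> -1"
  using assms unfolding arrangements_def by auto

lemma arr_stats_eq_if_same_pattern: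
  assumes arr: "(\<pi>, \<phi>) \<in> arrangements n k" "(\<pi>, \<phi>') \<in> arrangements n k"
    and same_max: "\<And>j. j \<in> FIXset \<pi> n \<Longrightarrow> \<phi>' j = - int k \<longleftrightarrow> \<phi> j = - int k"
    and same_desc: "\<And>j. j \<in> FIXset \<pi> n \<Longrightarrow> Suc j \<in> FIXset \<pi> n \<Longrightarrow>
                      \<phi> j > \<phi> (Suc j) \<longleftrightarrow> \<phi>' j > \<phi>' (Suc j)"
  shows "arr_stats n k (\<pi>, \<phi>') = arr_stats n k (\<pi>, \<phi>)"
proof -
  let ?F = "\<lambda>i. i \<in> FIXset \<pi> n"
  let ?P = "\<lambda>i. i \<in> FIXset \<pi> n \<and> \<phi> i \<noteq> - int k"
  have perm: "\<pi> permutes {1..n}" using arrangementsD(1)[OF arr(1)] .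
  have nonpos: "\<phi> i \<le> 0" "\<phi>' i \<le> 0" if "?F i" for i
    using arrangementsD(2)[OF arr(1) that] arrangementsD(2)[OF arr(2) that] by auto
  have pf_word: "pf n k (\<pi>, \<psi>) =
      pos_red (labelled_word n \<pi> (\<lambda>i. i \<in> FIXset \<pi> n \<and> \<psi> i \<noteq> - int k) \<psi>)" for \<psi>
    unfolding pf_def labelled_word_def by simp
  have "(\<lambda>i. i \<in> FIXset \<pi> n \<and> \<phi>' i \<noteq> - int k) = ?P"
    using same_max by auto
  then have pf: "pf n k (\<pi>, \<phi>) = pos_red (labelled_word n \<pi> ?P \<phi>)"
    "pf n k (\<pi>, \<phi>') = pos_red (labelled_word n \<pi> ?P \<phi>')"
    using pf_word by metis+
  have df: "df n k (\<pi>, \<psi>) = pos_red (labelled_word n \<pi> ?F \<psi>)" for \<psi>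
    unfolding df_def labelled_word_def by simp
  have "DESw (pf n k (\<pi>, \<phi>)) = DESw (pf n k (\<pi>, \<phi>'))"
    unfolding pf using nonpos same_desc by (intro labelled_word_stats(1)[OF perm]) auto
  moreover have "DESw (df n k (\<pi>, \<phi>)) = DESw (df n k (\<pi>, \<phi>'))"
    "Pos (df n k (\<pi>, \<phi>)) = Pos (df n k (\<pi>, \<phi>'))"
    unfolding df
    using labelled_word_stats[OF perm, where P = ?F and \<phi> = \<phi> and \<phi>' = \<phi>', OF nonpos same_desc]
    by blast+
  ultimately show ?thesis
    unfolding arr_stats_def DES_arr_def DEZ_arr_def Der_arr_def by simp
qed

section \<open>Exchanging two adjacent labels\<close>

definition swap_domain :: "nat \<Rightarrow> nat \<Rightarrow> (nat \<Rightarrow> nat) \<Rightarrow> (nat \<Rightarrow> int) \<Rightarrow> nat set" where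
  "swap_domain n a \<pi> \<phi> = {j \<in> FIXset \<pi> n. \<phi> j = - int a \<or> \<phi> j = - int (Suc a)}"

definition swapped_labels :: "nat \<Rightarrow> nat \<Rightarrow> (nat \<Rightarrow> nat) \<Rightarrow> (nat \<Rightarrow> int) \<Rightarrow> nat \<Rightarrow> int" where
  "swapped_labels n a \<pi> \<phi> j =
     (if j \<in> swap_domain n a \<pi> \<phi> then
        if flip_free (swap_domain n a \<pi> \<phi>) (\<lambda>i. \<phi> i = - int a) j then - int a else - int (Suc a)
      else \<phi> j)"

definition swap_labels ::
    "nat \<Rightarrow> nat \<Rightarrow> (nat \<Rightarrow> nat) \<times> (nat \<Rightarrow> int) \<Rightarrow> (nat \<Rightarrow> nat) \<times> (nat \<Rightarrow> int)" where
  "swap_labels n a x = (fst x, swapped_labels n a (fst x) (snd x))"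

lemma finite_swap_domain: "finite (swap_domain n a \<pi> \<phi>)"
  by (rule finite_subset[of _ "{1..n}"]) (auto simp: swap_domain_def FIXset_def)

lemma swap_domain_swapped_labels:
  "swap_domain n a \<pi> (swapped_labels n a \<pi> \<phi>) = swap_domain n a \<pi> \<phi>"
  by (auto simp: swap_domain_def swapped_labels_def)

lemma swapped_labels_involutive: "swapped_labels n a \<pi> (swapped_labels n a \<pi> \<phi>) = \<phi>"
proof
  fix j
  let ?S = "swap_domain n a \<pi> \<phi>" and ?b = "\<lambda>i. \<phi> i = - int a"
  show "swapped_labels n a \<pi> (swapped_labels n a \<pi> \<phi>) j = \<phi> j"
  proof (cases "j \<in> ?S")
    case True
    have "\<forall>i\<in>?S. (swapped_labels n a \<pi> \<phi> i = - int a) = flip_free ?S ?b i"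
      by (simp add: swapped_labels_def)
    then have "flip_free ?S (\<lambda>i. swapped_labels n a \<pi> \<phi> i = - int a) j = flip_free ?S (flip_free ?S ?b) j"
      by (rule flip_free_cong[OF finite_swap_domain _ True])
    also have "\<dots> = ?b j" by (simp add: flip_free_involutive[OF finite_swap_domain])
    finally show ?thesis
      using True unfolding swapped_labels_def[of n a \<pi> "swapped_labels n a \<pi> \<phi>"] swap_domain_swapped_labels
      by (auto simp: swap_domain_def)
  next
    case False
    then show ?thesis
      unfolding swapped_labels_def[of n a \<pi> "swapped_labels n a \<pi> \<phi>"] swap_domain_swapped_labels
      by (simp add: swapped_labels_def)
  qed
qed

lemma swap_labels_involutive: "swap_labels n a (swap_labels n a x) = x"
  by (simp add: swap_labels_def swapped_labels_involutive)

lemma swapped_labels_arrangement: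
  assumes "(\<pi>, \<phi>) \<in> arrangements n k" "1 \<le> a" "Suc a \<le> k"
  shows "(\<pi>, swapped_labels n a \<pi> \<phi>) \<in> arrangements n k"
  using assms unfolding arrangements_def swapped_labels_def swap_domain_def by auto

lemma fix_cnt_swapped_labels:
  "fix_cnt n i (\<pi>, swapped_labels n a \<pi> \<phi>) = fix_cnt n (Transposition.transpose a (Suc a) i) (\<pi>, \<phi>)"
proof -
  let ?S = "swap_domain n a \<pi> \<phi>" and ?b = "\<lambda>i. \<phi> i = - int a"
  have a: "{j \<in> FIXset \<pi> n. swapped_labels n a \<pi> \<phi> j = - int a} = {j\<in>?S. flip_free ?S ?b j}"
    "{j \<in> FIXset \<pi> n. \<phi> j = - int (Suc a)} = {j\<in>?S. \<not> ?b j}"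
    unfolding swapped_labels_def swap_domain_def by auto
  have Suc_a: "{j \<in> FIXset \<pi> n. swapped_labels n a \<pi> \<phi> j = - int (Suc a)} = {j\<in>?S. \<not> flip_free ?S ?b j}"
    "{j \<in> FIXset \<pi> n. \<phi> j = - int a} = {j\<in>?S. ?b j}"
    unfolding swapped_labels_def swap_domain_def by auto
  have "card {j\<in>?S. ?b j} = card {j\<in>?S. \<not> flip_free ?S ?b j}"
    using card_flip_free[OF finite_swap_domain, of n a \<pi> \<phi> "flip_free ?S ?b"]
    by (simp add: flip_free_involutive[OF finite_swap_domain])
  have other: "{j \<in> FIXset \<pi> n. swapped_labels n a \<pi> \<phi> j = - int i} = {j \<in> FIXset \<pi> n. \<phi> j = - int i}"
    if "i \<noteq> a" "i \<noteq> Suc a"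
    using that unfolding swapped_labels_def swap_domain_def by auto
  show ?thesis
    unfolding fix_cnt_def using a Suc_a other card_flip_free[OF finite_swap_domain] \<open>card _ = _\<close>
    by (auto simp: transpose_def)
qed

lemma swapped_labels_descent_iff:
  assumes "j \<in> FIXset \<pi> n" "Suc j \<in> FIXset \<pi> n"
  shows "\<phi> j > \<phi> (Suc j) \<longleftrightarrow> swapped_labels n a \<pi> \<phi> j > swapped_labels n a \<pi> \<phi> (Suc j)"
proof -
  let ?S = "swap_domain n a \<pi> \<phi>" and ?b = "\<lambda>i. \<phi> i = - int a"
  consider "j \<in> ?S" "Suc j \<in> ?S" | "j \<in> ?S \<longleftrightarrow> Suc j \<notin> ?S" | "j \<notin> ?S" "Suc j \<notin> ?S"
    by blast
  then show ?thesis
  proof cases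
    case 1
    then have "\<phi> j > \<phi> (Suc j) \<longleftrightarrow> j \<in> bool_descents ?S ?b"
      "swapped_labels n a \<pi> \<phi> j > swapped_labels n a \<pi> \<phi> (Suc j) \<longleftrightarrow>
         j \<in> bool_descents ?S (flip_free ?S ?b)"
      unfolding bool_descents_def swapped_labels_def by (auto simp: swap_domain_def)
    then show ?thesis by (simp add: bool_descents_flip_free[OF finite_swap_domain])
  next
    case 2
    \<comment> \<open>a label other than -a and -(a+1) compares in the same way with both of them\<close>
    then show ?thesis
      using assms unfolding swapped_labels_def swap_domain_def by auto
  next
    case 3
    then show ?thesis unfolding swapped_labels_def by simp
  qed
qed

lemma arr_stats_swapped_labels:
  assumes arr: "(\<pi>, \<phi>) \<in> arrangements n k" and a: "1 \<le> a" "Suc a < k"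
  shows "arr_stats n k (\<pi>, swapped_labels n a \<pi> \<phi>) = arr_stats n k (\<pi>, \<phi>)"
proof (rule arr_stats_eq_if_same_pattern[OF arr swapped_labels_arrangement[OF arr a(1)]])
  show "Suc a \<le> k" using a(2) by simp
  show "swapped_labels n a \<pi> \<phi> j = - int k \<longleftrightarrow> \<phi> j = - int k" for j
    using a(2) unfolding swapped_labels_def swap_domain_def by auto
qed (rule swapped_labels_descent_iff)

lemma swap_labels_bij:
  assumes "1 \<le> a" "Suc a < k"
  shows "bij_betw (swap_labels n a) (arrangements_m n k m)
           (arrangements_m n k (m \<circ> Transposition.transpose a (Suc a)))"
proof -
  let ?t = "Transposition.transpose a (Suc a)"
  have maps: "swap_labels n a x \<in> arrangements_m n k (m' \<circ> ?t)" if "x \<in> arrangements_m n k m'" for x m'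
  proof -
    obtain \<pi> \<phi> where x: "x = (\<pi>, \<phi>)" by fastforce
    have "(\<pi>, swapped_labels n a \<pi> \<phi>) \<in> arrangements n k"
      using that assms swapped_labels_arrangement unfolding x arrangements_m_def by auto
    moreover have "?t i \<in> {1..k}" if "i \<in> {1..k}" for i
      using that assms by (auto simp: transpose_def)
    ultimately show ?thesis
      using that unfolding x swap_labels_def arrangements_m_def by (simp add: fix_cnt_swapped_labels)
  qed
  have "m \<circ> ?t \<circ> ?t = m" by (rule ext) (simp add: transpose_def)
  then show ?thesis
    using maps[of _ m] maps[of _ "m \<circ> ?t"] swap_labels_involutive
    by (intro bij_betw_byWitness[where f' = "swap_labels n a"]) auto
qed

definition stat_equiv :: "nat \<Rightarrow> nat \<Rightarrow> (nat \<Rightarrow> nat) \<Rightarrow> (nat \<Rightarrow> nat) \<Rightarrow> bool" where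
  "stat_equiv n k m m' \<longleftrightarrow> (\<exists>f. bij_betw f (arrangements_m n k m) (arrangements_m n k m') \<and>
     (\<forall>x \<in> arrangements_m n k m. arr_stats n k (f x) = arr_stats n k x))"

lemma stat_equiv_refl: "stat_equiv n k m m"
  unfolding stat_equiv_def by (rule exI[of _ id]) simp

lemma stat_equiv_trans:
  assumes "stat_equiv n k m1 m2" "stat_equiv n k m2 m3"
  shows "stat_equiv n k m1 m3"
proof -
  obtain f where f: "bij_betw f (arrangements_m n k m1) (arrangements_m n k m2)"
    "\<forall>x \<in> arrangements_m n k m1. arr_stats n k (f x) = arr_stats n k x"
    using assms(1) unfolding stat_equiv_def by blast
  obtain g where g: "bij_betw g (arrangements_m n k m2) (arrangements_m n k m3)"
    "\<forall>x \<in> arrangements_m n k m2. arr_stats n k (g x) = arr_stats n k x"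
    using assms(2) unfolding stat_equiv_def by blast
  have "\<forall>x \<in> arrangements_m n k m1. arr_stats n k (g (f x)) = arr_stats n k x"
    using f g bij_betwE by fastforce
  then show ?thesis
    unfolding stat_equiv_def using bij_betw_trans[OF f(1) g(1)] by (intro exI[of _ "g \<circ> f"]) simp
qed

lemma stat_equiv_adjacent_transpose:
  assumes "1 \<le> a" "Suc a < k"
  shows "stat_equiv n k m (m \<circ> Transposition.transpose a (Suc a))"
  unfolding stat_equiv_def
proof (intro exI conjI)
  show "bij_betw (swap_labels n a) (arrangements_m n k m)
          (arrangements_m n k (m \<circ> Transposition.transpose a (Suc a)))"
    by (rule swap_labels_bij[OF assms])
  show "\<forall>x\<in>arrangements_m n k m. arr_stats n k (swap_labels n a x) = arr_stats n k x"
    using arr_stats_swapped_labels[OF _ assms] unfolding arrangements_m_def swap_labels_def by auto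
qed

lemma stat_equiv_transpose_add:
  "1 \<le> a \<Longrightarrow> a + d < k \<Longrightarrow> stat_equiv n k m (m \<circ> Transposition.transpose a (a + d))"
proof (induction d arbitrary: a m)
  case 0
  then show ?case using stat_equiv_refl by simp
next
  case (Suc d)
  let ?t = "Transposition.transpose a (Suc a)" and ?t' = "Transposition.transpose (Suc a) (Suc a + d)"
  show ?case
  proof (cases "d = 0")
    case True
    then have "a + Suc d = Suc a" by simp
    then show ?thesis using stat_equiv_adjacent_transpose[of a k n m] Suc.prems by metis
  next
    case False
    have decompose: "Transposition.transpose a (a + Suc d) = ?t \<circ> ?t' \<circ> ?t"
      using False by (intro ext) (simp add: transpose_def)
    have "stat_equiv n k m (m \<circ> ?t \<circ> ?t' \<circ> ?t)"
    proof -
      have "stat_equiv n k m (m \<circ> ?t)" "stat_equiv n k (m \<circ> ?t \<circ> ?t') (m \<circ> ?t \<circ> ?t' \<circ> ?t)"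
        using stat_equiv_adjacent_transpose Suc.prems by auto
      moreover have "1 \<le> Suc a" "Suc a + d < k" using Suc.prems by simp_all
      then have "stat_equiv n k (m \<circ> ?t) (m \<circ> ?t \<circ> ?t')" by (rule Suc.IH)
      ultimately show ?thesis using stat_equiv_trans by blast
    qed
    then show ?thesis unfolding decompose by (simp only: comp_assoc)
  qed
qed

lemma stat_equiv_transpose:
  assumes "a \<in> {1..k-1}" "b \<in> {1..k-1}"
  shows "stat_equiv n k m (m \<circ> Transposition.transpose a b)"
proof (cases "a \<le> b")
  case True
  then obtain d where "b = a + d" using le_Suc_ex by blast
  then show ?thesis using stat_equiv_transpose_add[of a d k n m] assms by auto
next
  case False
  then obtain d where "a = b + d" using le_Suc_ex[of b a] by auto
  then show ?thesis
    using stat_equiv_transpose_add[of b d k n m] assms by (auto simp: transpose_commute)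
qed

lemma stat_equiv_permutes:
  assumes "\<tau> permutes {1..k-1}"
  shows "stat_equiv n k m (m \<circ> \<tau>)"
  using assms finite_atLeastAtMost
proof (induction arbitrary: m rule: permutes_induct)
  case id
  then show ?case using stat_equiv_refl by simp
next
  case (swap a b p)
  then show ?case
    using stat_equiv_transpose stat_equiv_trans by (metis comp_assoc)
qed

theorem lemma2p3:
  fixes n k :: nat and m :: "nat \<Rightarrow> nat" and \<tau> :: "nat \<Rightarrow> nat"
  assumes "n \<ge> 1" and "k \<ge> 1" and "\<tau> permutes {1..k-1}"
  shows "\<exists>f. bij_betw f (arrangements_m n k m)
              (arrangements_m n k (\<lambda>i. if i \<in> {1..k-1} then m (\<tau> i) else m i)) \<and>
            (\<forall>a \<in> arrangements_m n k m.
               DES_arr n k (f a) = DES_arr n k a \<and>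
               DEZ_arr n k (f a) = DEZ_arr n k a \<and>
               Der_arr n k (f a) = Der_arr n k a)"
proof -
  have "(\<lambda>i. if i \<in> {1..k-1} then m (\<tau> i) else m i) = m \<circ> \<tau>"
    using permutes_not_in[OF assms(3)] by (intro ext) auto
  then show ?thesis
    using stat_equiv_permutes[OF assms(3), of n m] unfolding stat_equiv_def arr_stats_def by simp
qed

end
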